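(* Let $\mathcal{C}$ be a finite Coxeter group of rank $p$, realized as a group of real orthogonal $p\times p$ matrices acting on $V=\mathbb{R}^p$. Let $R$ and $\bar R$ be two elements of $\mathcal{C}$ (each a product of reflections $R_v$ in root vectors, or the identity), and consider the linearized covariant derivative $$D f=\Big[D_L+\delta^{nm}e^{\alpha\dot\alpha}(P_+)_{nm}{}^{kl}\,(y_{\alpha k}\hat{\bar\partial}_{\dot\alpha l}+\bar y_{\dot\alpha l}\hat\partial_{\alpha k})-i\,\delta^{nm}e^{\alpha\dot\alpha}(P_-)_{nm}{}^{kl}\,(y_{\alpha k}\bar y_{\dot\alpha l}-\hat\partial_{\alpha k}\hat{\bar\partial}_{\dot\alpha l})\Big]f,$$ with $P_\pm^{kl}=\tfrac12\delta^{nm}\big(\mathbb{1}^k_n\bar{\mathbb{1}}^l_m\pm R^k{}_n\bar R^l{}_m\big)$, acting on functions $f(y_1,\dots,y_p,\bar y_1,\dots,\bar y_p|x)$. Then the corresponding module is disentangled (i.e. isomorphic to a tensor product of standard adjoint and twisted-adjoint modules of the standard $4d$ higher-spin theory) if and only if $(R\bar R^{T})^2=\mathbb{1}$.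
   Context: Variables: for each $n\in\{1,\dots,p\}$ there are commuting two-component spinor variables $y^\alpha_n$ ($\alpha=1,2$) and $\bar y^{\dot\alpha}_n$ ($\dot\alpha=1,2$), with real-conjugate pairing $y^\dagger=\bar y$; $\partial_{\alpha n}=\partial/\partial y^\alpha_n$, $\bar\partial_{\dot\alpha n}=\partial/\partial\bar y^{\dot\alpha}_n$ (hats denote dressing by idempotents and may be ignored here). $e^{\alpha\dot\alpha}$ is the $AdS_4$ vierbein one-form and $D_L=d_x+\delta^{nm}(\omega^{\alpha\beta}y_{\alpha n}\partial_{\beta m}+\bar\omega^{\dot\alpha\dot\beta}\bar y_{\dot\alpha n}\bar\partial_{\dot\beta m})$ is the Lorentz covariant derivative built from the $AdS_4$ spin connection. The standard adjoint module of the $4d$ higher-spin theory (for a single pair $y,\bar y$) is defined by the operator $D_L+e^{\alpha\dot\alpha}(y_\alpha\bar\partial_{\dot\alpha}+\bar y_{\dot\alpha}\partial_\alpha)$, and the standard twisted-adjoint module by $D_L-ie^{\alpha\dot\alpha}(y_\alpha\bar y_{\dot\alpha}-\partial_\alpha\bar\partial_{\dot\alpha})$. A module defined by $D$ is called disentangled if, after a real (orthogonal) linear change of the Coxeter labels $n$ of the variables $y_n,\bar y_n$, the operator $D$ becomes a sum over the new labels of standard adjoint or twisted-adjoint operators each acting on one pair of variables, i.e. the module is isomorphic to a tensor product of standard adjoint and twisted-adjoint modules; otherwise it is called entangled. *)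

theory Defs
  imports "HOL-Analysis.Analysis"
begin

text \<open>Matrices are indexed by the Coxeter labels, a finite type 'n with CARD('n) = p.\<close>

definition reflection_matrix :: "real^'n \<Rightarrow> real^'n^'n" where
  "reflection_matrix v = (\<chi> i j. (if i = j then 1 else 0) - 2 * v$i * v$j / (v \<bullet> v))"

definition generated_by :: "(real^'n^'n) set \<Rightarrow> (real^'n^'n) set" where
  "generated_by S = {foldr (**) xs (mat 1) | xs. set xs \<subseteq> S}"

definition finite_coxeter_group :: "(real^'n^'n) set \<Rightarrow> bool" where
  "finite_coxeter_group C \<longleftrightarrow>
     (\<exists>S. finite S \<and> S \<subseteq> {reflection_matrix v | v. v \<noteq> 0} \<and> C = generated_by S) \<and> finite C"

definition P_plus :: "real^'n^'n \<Rightarrow> real^'n^'n \<Rightarrow> real^'n^'n" where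
  "P_plus R Rb = (\<chi> k l. (1/2) * (\<Sum>n\<in>UNIV. (if k = n then 1 else 0) * (if l = n then 1 else 0)
                                       + R$k$n * Rb$l$n))"

definition P_minus :: "real^'n^'n \<Rightarrow> real^'n^'n \<Rightarrow> real^'n^'n" where
  "P_minus R Rb = (\<chi> k l. (1/2) * (\<Sum>n\<in>UNIV. (if k = n then 1 else 0) * (if l = n then 1 else 0)
                                       - R$k$n * Rb$l$n))"

text \<open>An operator of the form
  D = D_L + e^{a a'} A^{kl} (y_{a k} dbar_{a' l} + ybar_{a' l} d_{a k})
          - i e^{a a'} B^{kl} (y_{a k} ybar_{a' l} - d_{a k} dbar_{a' l})
  is determined (D_L being fixed and O(p)-invariant) by its coefficient matrices (A, B).
  Under a real orthogonal relabeling y_n = O_n^{n'} y'_{n'} (same for ybar) the coefficients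
  transform as A' = O^T A O, B' = O^T B O.\<close>
definition relabel :: "real^'n^'n \<Rightarrow> real^'n^'n \<Rightarrow> real^'n^'n" where
  "relabel Q A = transpose Q ** A ** Q"

text \<open>Disentangled: after some orthogonal relabeling, the operator is a sum over labels of
  standard adjoint operators (A'_{kk} = 1, B'_{kk} = 0) or standard twisted-adjoint
  operators (A'_{kk} = 0, B'_{kk} = 1), each acting on one pair y_k, ybar_k.\<close>
definition disentangled :: "real^'n^'n \<Rightarrow> real^'n^'n \<Rightarrow> bool" where
  "disentangled A B \<longleftrightarrow>
     (\<exists>Q (adj :: 'n \<Rightarrow> bool). orthogonal_matrix Q \<and>
        relabel Q A = (\<chi> k l. if k = l \<and> adj k then 1 else 0) \<and>
        relabel Q B = (\<chi> k l. if k = l \<and> \<not> adj k then 1 else 0))"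

end

theory Submission
  imports Defs
begin

text \<open>Writing \<open>M = R Rb\<^sup>T\<close>, the two coefficient matrices are \<open>P\<^sub>\<plusminus> = (1 \<plusminus> M)/2\<close>, and an
  orthogonal relabeling \<open>Q\<close> replaces \<open>M\<close> by \<open>Q\<^sup>T M Q\<close>. The module is disentangled exactly
  when some relabeling turns \<open>M\<close> into a diagonal matrix of signs, i.e. when \<open>M\<close> is orthogonally
  diagonalizable with eigenvalues \<open>\<plusminus>1\<close>. That happens iff \<open>M\<close> is a symmetric involution, and
  since \<open>M\<close> is orthogonal (Coxeter groups consist of products of reflections), symmetry is
  automatic for an involution: \<open>M\<^sup>T = M\<^sup>T M M = M\<close>.\<close>

lemma matrix_add_rdistrib: "((A::'a::semiring_1^'n^'m) + B) ** C = A ** C + B ** C"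
  by (vector matrix_matrix_mult_def sum.distrib[symmetric] field_simps)

lemma matrix_diff_ldistrib: "(A::'a::ring_1^'n^'m) ** (B - C) = A ** B - A ** C"
  by (vector matrix_matrix_mult_def sum_subtractf[symmetric] field_simps)

lemma matrix_diff_rdistrib: "((A::'a::ring_1^'n^'m) - B) ** C = A ** C - B ** C"
  by (vector matrix_matrix_mult_def sum_subtractf[symmetric] field_simps)

definition diag_matrix :: "('n \<Rightarrow> 'a::zero) \<Rightarrow> 'a^'n^'n" where
  "diag_matrix d = (\<chi> k l. if k = l then d k else 0)"

lemma transpose_diag_matrix [simp]: "transpose (diag_matrix d) = diag_matrix d"
  by (simp add: diag_matrix_def transpose_def vec_eq_iff)

lemma diag_matrix_mult:
  "diag_matrix d ** diag_matrix e = diag_matrix (\<lambda>k. d k * (e k :: 'a::semiring_1))"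
proof -
  have "(\<Sum>j\<in>UNIV. (if i = j then d i else 0) * (if j = k then e j else 0))
      = (\<Sum>j\<in>UNIV. if j = i then (if i = k then d i * e i else 0) else 0)" for i k
    by (rule sum.cong) auto
  then show ?thesis
    by (simp add: diag_matrix_def matrix_matrix_mult_def vec_eq_iff)
qed

lemma relabel_add: "relabel Q (A + B) = relabel Q A + relabel Q B"
  by (simp add: relabel_def matrix_add_ldistrib matrix_add_rdistrib)

lemma relabel_diff: "relabel Q (A - B) = relabel Q A - relabel Q B"
  by (simp add: relabel_def matrix_diff_ldistrib matrix_diff_rdistrib)

lemma relabel_scaleR: "relabel Q (c *\<^sub>R A) = c *\<^sub>R relabel Q A"
  by (simp add: relabel_def matrix_scalar_ac scalar_matrix_assoc)

lemma relabel_mat_1: "orthogonal_matrix Q \<Longrightarrow> relabel Q (mat 1) = mat 1"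
  by (simp add: relabel_def orthogonal_matrix)

lemma relabel_relabel:
  "orthogonal_matrix Q \<Longrightarrow> relabel (transpose Q) (relabel Q M) = M"
  by (simp add: relabel_def matrix_mul_assoc orthogonal_matrix_def)
    (simp flip: matrix_mul_assoc add: orthogonal_matrix_def)

lemma transpose_relabel: "transpose (relabel Q A) = relabel Q (transpose A)"
  by (simp add: relabel_def matrix_transpose_mul matrix_mul_assoc)

lemma relabel_mult:
  "orthogonal_matrix Q \<Longrightarrow> relabel Q A ** relabel Q B = relabel Q (A ** B)"
  by (simp add: relabel_def matrix_mul_assoc orthogonal_matrix_def)
    (simp flip: matrix_mul_assoc add: orthogonal_matrix_def)

lemma involution_orthogonal_iff_symmetric:
  fixes M :: "real^'n^'n"
  assumes "M ** M = mat 1"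
  shows "orthogonal_matrix M \<longleftrightarrow> transpose M = M"
proof
  assume "orthogonal_matrix M"
  then have "transpose M ** M = mat 1" by (simp add: orthogonal_matrix)
  then have "transpose M ** (M ** M) = M" by (simp add: matrix_mul_assoc)
  then show "transpose M = M" by (simp add: assms)
qed (simp add: assms orthogonal_matrix)

lemma reflection_matrix_vector_mult:
  "reflection_matrix v *v x = x - (2 * (v \<bullet> x) / (v \<bullet> v)) *\<^sub>R v"
proof -
  have "reflection_matrix v = mat 1 - (2 / (v \<bullet> v)) *\<^sub>R (\<chi> i j. v$i * v$j)"
    by (simp add: reflection_matrix_def mat_def vec_eq_iff)
  moreover have "(\<chi> i j. v$i * v$j) *v x = (v \<bullet> x) *\<^sub>R v"
    by (simp add: matrix_vector_mult_def inner_vec_def vec_eq_iff sum_distrib_left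
        sum_distrib_right mult_ac)
  ultimately show ?thesis
    by (simp add: matrix_vector_mult_diff_rdistrib flip: scaleR_matrix_vector_assoc)
qed

lemma reflection_matrix_involution:
  assumes "v \<noteq> 0"
  shows "reflection_matrix v ** reflection_matrix v = mat 1"
proof -
  have "reflection_matrix v *v (reflection_matrix v *v x) = x" for x
  proof -
    define c where "c = 2 * (v \<bullet> x) / (v \<bullet> v)"
    have "v \<bullet> (x - c *\<^sub>R v) = - (v \<bullet> x)"
      using assms by (simp add: c_def inner_diff_right)
    then show ?thesis
      by (simp add: reflection_matrix_vector_mult flip: c_def)
  qed
  then show ?thesis
    by (simp add: matrix_eq matrix_vector_mul_assoc[symmetric])
qed

lemma orthogonal_matrix_reflection_matrix:
  assumes "v \<noteq> 0"
  shows "orthogonal_matrix (reflection_matrix v)"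
proof -
  have "transpose (reflection_matrix v) = reflection_matrix v"
    by (simp add: reflection_matrix_def transpose_def vec_eq_iff mult.commute)
  with reflection_matrix_involution[OF assms] show ?thesis
    by (simp add: involution_orthogonal_iff_symmetric)
qed

lemma finite_coxeter_group_orthogonal:
  assumes "finite_coxeter_group C" and "R \<in> C"
  shows "orthogonal_matrix R"
proof -
  obtain S where S: "S \<subseteq> {reflection_matrix v | v. v \<noteq> 0}" and C: "C = generated_by S"
    using assms(1) by (auto simp: finite_coxeter_group_def)
  obtain xs where R: "R = foldr (**) xs (mat 1)" and xs: "set xs \<subseteq> S"
    using assms(2) by (auto simp: C generated_by_def)
  from xs have "orthogonal_matrix (foldr (**) xs (mat 1))"
  proof (induction xs)
    case Nil
    then show ?case by (simp add: orthogonal_matrix_id)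
  next
    case (Cons a xs)
    then obtain v where "v \<noteq> 0" "a = reflection_matrix v" using S by auto
    with Cons show ?case
      by (simp add: orthogonal_matrix_mul orthogonal_matrix_reflection_matrix)
  qed
  then show ?thesis by (simp add: R)
qed

lemma symmetric_matrix_eigenvectors_orthogonal:
  fixes M :: "real^'n^'n"
  assumes "transpose M = M" and "M *v x = a *\<^sub>R x" and "M *v y = b *\<^sub>R y" and "a \<noteq> b"
  shows "x \<bullet> y = 0"
proof -
  have "(M *v x) \<bullet> y = x \<bullet> (M *v y)"
    by (metis assms(1) dot_lmul_matrix transpose_matrix_vector)
  then have "a * (x \<bullet> y) = b * (x \<bullet> y)" by (simp add: assms(2,3))
  with assms(4) show ?thesis by simp
qed

lemma involution_eigenvectors_span:
  fixes M :: "real^'n^'n"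
  assumes "M ** M = mat 1"
  shows "span ({x. M *v x = x} \<union> {x. M *v x = - x}) = UNIV"
proof -
  have "x \<in> span ({x. M *v x = x} \<union> {x. M *v x = - x})" for x
  proof -
    have MMx: "M *v (M *v x) = x" by (simp add: matrix_vector_mul_assoc assms)
    have "(1/2) *\<^sub>R (x + M *v x) \<in> {x. M *v x = x}"
      by (simp add: algebra_simps MMx)
    moreover have "(1/2) *\<^sub>R (x - M *v x) \<in> {x. M *v x = - x}"
      by (simp add: algebra_simps MMx)
    moreover have "x = (1/2) *\<^sub>R (x + M *v x) + (1/2) *\<^sub>R (x - M *v x)"
      by (simp add: algebra_simps flip: scaleR_2)
    ultimately show ?thesis
      by (metis (no_types, lifting) UnCI span_add span_base)
  qed
  then show ?thesis by auto
qed

lemma orthonormal_basis_enumeration: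
  fixes B :: "(real^'n) set"
  assumes "pairwise orthogonal B" and "\<And>x. x \<in> B \<Longrightarrow> norm x = 1" and "span B = UNIV"
  obtains f :: "'n \<Rightarrow> real^'n"
  where "range f = B" and "\<And>i j. f i \<bullet> f j = (if i = j then 1 else 0)"
proof -
  have "independent B"
    using assms(1,2) pairwise_orthogonal_independent by force
  then have "finite B" and "card B = CARD('n)"
    using basis_card_eq_dim[of B UNIV] assms(3) by (auto intro: finiteI_independent)
  then obtain f where f: "bij_betw f (UNIV :: 'n set) B"
    by (metis finite_class.finite_UNIV finite_same_card_bij)
  then have inj: "inj f" and range: "range f = B" by (auto simp: bij_betw_def)
  have "f i \<bullet> f j = (if i = j then 1 else 0)" for i j
  proof (cases "i = j")
    case True
    then show ?thesis using assms(2) range by (auto simp: norm_eq_1)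
  next
    case False
    then have "f i \<noteq> f j" using inj by (auto dest: injD)
    then show ?thesis
      using False assms(1) range by (auto simp: pairwise_def orthogonal_def)
  qed
  with range that show ?thesis by blast
qed

lemma symmetric_involution_orthonormal_eigenbasis:
  fixes M :: "real^'n^'n"
  assumes "transpose M = M" and "M ** M = mat 1"
  obtains f :: "'n \<Rightarrow> real^'n" and adj :: "'n \<Rightarrow> bool"
  where "\<And>i j. f i \<bullet> f j = (if i = j then 1 else 0)"
    and "\<And>k. M *v f k = (if adj k then 1 else -1) *\<^sub>R f k"
proof -
  define U where "U = {x. M *v x = x}"
  define W where "W = {x. M *v x = - x}"
  have "subspace U" "subspace W"
    by (auto simp: subspace_def U_def W_def matrix_vector_right_distrib matrix_vector_mult_scaleR)
  obtain BU where BU: "BU \<subseteq> U" "pairwise orthogonal BU" "\<And>x. x \<in> BU \<Longrightarrow> norm x = 1"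
      "span BU = U"
    using orthonormal_basis_subspace[OF \<open>subspace U\<close>] by metis
  obtain BW where BW: "BW \<subseteq> W" "pairwise orthogonal BW" "\<And>x. x \<in> BW \<Longrightarrow> norm x = 1"
      "span BW = W"
    using orthonormal_basis_subspace[OF \<open>subspace W\<close>] by metis
  have UW: "x \<bullet> y = 0" if "x \<in> U" "y \<in> W" for x y
    using symmetric_matrix_eigenvectors_orthogonal[OF assms(1), of x 1 y "-1"] that
    by (simp add: U_def W_def)
  have orth: "pairwise orthogonal (BU \<union> BW)"
  proof (rule pairwiseI)
    fix x y assume "x \<in> BU \<union> BW" "y \<in> BU \<union> BW" "x \<noteq> y"
    with BU(1,2) BW(1,2) UW[of x y] UW[of y x] show "orthogonal x y"
      by (auto simp: pairwise_def orthogonal_def inner_commute)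
  qed
  have unit: "norm x = 1" if "x \<in> BU \<union> BW" for x
    using that BU(3) BW(3) by blast
  have spanning: "span (BU \<union> BW) = UNIV"
  proof -
    have "U \<union> W \<subseteq> span (BU \<union> BW)"
      using BU(4) BW(4) span_mono[of BU "BU \<union> BW"] span_mono[of BW "BU \<union> BW"] by auto
    then have "span (U \<union> W) \<subseteq> span (BU \<union> BW)"
      by (simp add: span_minimal)
    then show ?thesis
      using involution_eigenvectors_span[OF assms(2)] by (auto simp: U_def W_def)
  qed
  obtain f :: "'n \<Rightarrow> real^'n" where f: "range f = BU \<union> BW"
    and orthonormal: "\<And>i j. f i \<bullet> f j = (if i = j then 1 else 0)"
    using orthonormal_basis_enumeration[OF orth unit spanning] by blast
  have "M *v f k = (if f k \<in> BU then 1 else -1) *\<^sub>R f k" for k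
    using f BU(1) BW(1) by (auto simp: U_def W_def)
  with orthonormal show ?thesis by (rule that)
qed

lemma relabel_by_orthonormal_eigenbasis:
  fixes M :: "real^'n^'n"
  assumes "\<And>i j. f i \<bullet> f j = (if i = j then 1 else 0)" and "\<And>k. M *v f k = d k *\<^sub>R f k"
  defines "Q \<equiv> \<chi> i j. f j $ i"
  shows "orthogonal_matrix Q" and "relabel Q M = diag_matrix d"
proof -
  show "orthogonal_matrix Q"
    using assms(1) by (simp add: Q_def orthogonal_matrix_orthonormal_columns column_def
        orthogonal_def norm_eq_1)
  have "M ** Q = (\<chi> i k. d k * f k $ i)"
    using assms(2) by (simp add: vec_eq_iff matrix_matrix_mult_def matrix_vector_mult_def Q_def)
  moreover have "(\<Sum>i\<in>UNIV. f j $ i * (d k * f k $ i)) = d k * (f j \<bullet> f k)" for j k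
    by (simp add: inner_vec_def sum_distrib_left mult.left_commute)
  ultimately show "relabel Q M = diag_matrix d"
    unfolding relabel_def matrix_mul_assoc[symmetric]
    using assms(1)
    by (simp add: vec_eq_iff matrix_matrix_mult_def Q_def transpose_def diag_matrix_def)
qed

lemma orthogonally_sign_diagonalizable_iff:
  fixes M :: "real^'n^'n"
  shows "(\<exists>Q adj. orthogonal_matrix Q \<and>
            relabel Q M = diag_matrix (\<lambda>k. if adj k then 1 else -1)) \<longleftrightarrow>
         transpose M = M \<and> M ** M = mat 1"
proof
  assume "\<exists>Q adj. orthogonal_matrix Q \<and> relabel Q M = diag_matrix (\<lambda>k. if adj k then 1 else -1)"
  then obtain Q adj where Q: "orthogonal_matrix Q"
    and D: "relabel Q M = diag_matrix (\<lambda>k. if adj k then 1 else -1)"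
    by blast
  define D where "D = diag_matrix (\<lambda>k. if adj k then 1 else -1 :: real)"
  have "M = relabel (transpose Q) D"
    using relabel_relabel[OF Q, of M] by (simp add: D D_def)
  moreover have "transpose D = D"
    by (simp add: D_def)
  moreover have "D ** D = mat 1"
    unfolding D_def diag_matrix_mult by (simp add: diag_matrix_def mat_def vec_eq_iff)
  moreover have "orthogonal_matrix (transpose Q)"
    using Q by simp
  ultimately show "transpose M = M \<and> M ** M = mat 1"
    by (simp add: transpose_relabel relabel_mult relabel_mat_1)
next
  assume "transpose M = M \<and> M ** M = mat 1"
  then obtain f :: "'n \<Rightarrow> real^'n" and adj
    where orthonormal: "\<And>i j. f i \<bullet> f j = (if i = j then 1 else 0)"
      and eigen: "\<And>k. M *v f k = (if adj k then 1 else -1) *\<^sub>R f k"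
    using symmetric_involution_orthonormal_eigenbasis by blast
  show "\<exists>Q adj. orthogonal_matrix Q \<and> relabel Q M = diag_matrix (\<lambda>k. if adj k then 1 else -1)"
    using relabel_by_orthonormal_eigenbasis[OF orthonormal eigen] by blast
qed

lemma sum_delta_mult_delta:
  fixes k l :: "'n::finite"
  shows "(\<Sum>n\<in>UNIV. (if k = n then 1 else 0) * (if l = n then 1 else 0) :: 'a::semiring_1) =
   (if k = l then 1 else 0)"
proof -
  have "(\<Sum>n\<in>UNIV. (if k = n then 1 else 0) * (if l = n then 1 else 0) :: 'a) =
        (\<Sum>n\<in>UNIV. if n = k then (if k = l then 1 else 0) else 0)"
    by (rule sum.cong) auto
  also have "\<dots> = (if k = l then 1 else 0)"
    by (rule trans[OF sum.delta]) simp_all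
  finally show ?thesis .
qed

lemma P_plus_eq: "P_plus R Rb = (1/2) *\<^sub>R (mat 1 + R ** transpose Rb)"
  by (simp add: P_plus_def vec_eq_iff matrix_matrix_mult_def transpose_def mat_def sum.distrib
      sum_delta_mult_delta)

lemma P_minus_eq: "P_minus R Rb = (1/2) *\<^sub>R (mat 1 - R ** transpose Rb)"
  by (simp add: P_minus_def vec_eq_iff matrix_matrix_mult_def transpose_def mat_def sum_subtractf
      sum_delta_mult_delta)

lemma disentangled_half_sum_diff_iff:
  fixes M :: "real^'n^'n"
  shows "disentangled ((1/2) *\<^sub>R (mat 1 + M)) ((1/2) *\<^sub>R (mat 1 - M)) \<longleftrightarrow>
         (\<exists>Q adj. orthogonal_matrix Q \<and>
            relabel Q M = diag_matrix (\<lambda>k. if adj k then 1 else -1))"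
proof -
  have "(1/2) *\<^sub>R (mat 1 + D) = (\<chi> k l. if k = l \<and> adj k then 1 else 0) \<and>
        (1/2) *\<^sub>R (mat 1 - D) = (\<chi> k l. if k = l \<and> \<not> adj k then 1 else 0) \<longleftrightarrow>
        D = diag_matrix (\<lambda>k. if adj k then 1 else -1)" for D :: "real^'n^'n" and adj
    by (auto simp: vec_eq_iff mat_def diag_matrix_def split: if_splits)
  then show ?thesis
    by (simp add: disentangled_def relabel_scaleR relabel_add relabel_diff relabel_mat_1
        cong: conj_cong)
qed

theorem mainTheorem1:
  fixes C :: "(real^'n^'n) set" and R Rb :: "real^'n^'n"
  assumes "finite_coxeter_group C" and "R \<in> C" and "Rb \<in> C"
  shows "disentangled (P_plus R Rb) (P_minus R Rb) \<longleftrightarrow>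
         (R ** transpose Rb) ** (R ** transpose Rb) = mat 1"
proof -
  define M where "M = R ** transpose Rb"
  have "orthogonal_matrix M"
    using finite_coxeter_group_orthogonal[OF assms(1)] assms(2,3)
    by (simp add: M_def orthogonal_matrix_mul)
  then have "disentangled (P_plus R Rb) (P_minus R Rb) \<longleftrightarrow> M ** M = mat 1"
    unfolding P_plus_eq P_minus_eq M_def[symmetric] disentangled_half_sum_diff_iff
      orthogonally_sign_diagonalizable_iff
    using involution_orthogonal_iff_symmetric by blast
  then show ?thesis by (simp add: M_def)
qed

end
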